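(* The set of all bicoloured noncrossing configurations (of all sizes $n\ge1$), together with the composition maps $\circ_i$ described in the context and the unique bicoloured noncrossing configuration of size $1$ as unit, forms a (nonsymmetric) operad, where the arity of a configuration is its size.
   Context: For $n\ge2$, a bicoloured noncrossing configuration (BNC) of size $n$ is a regular polygon with $n+1$ vertices numbered $1,\dots,n+1$ clockwise, together with two disjoint sets of arcs, a set of blue arcs and a set of red arcs. An arc is a pair $(i,j)$ with $1\le i<j\le n+1$. The arcs $(i,i+1)$, $1\le i\le n$, are the edges ($(i,i+1)$ is the $i$th edge), $(1,n+1)$ is the base, and all other arcs are diagonals. The required conditions are: no two coloured (blue or red) arcs cross, where $(i,j)$ and $(k,l)$ cross iff $i<k<j<l$ or $k<i<l<j$; and every red arc is a diagonal. An arc that is neither blue nor red is uncoloured. By convention there is exactly one BNC of size $1$: a segment $(1,2)$ that is blue; it serves both as its unique ($1$st) edge and as its base. Composition: let $\mathfrak C$ and $\mathfrak D$ be BNCs of sizes $n$ and $m$, and let $i\in[n]$. Then $\mathfrak E=\mathfrak C\circ_i\mathfrak D$ is the BNC of size $n+m-1$ obtained by gluing the base of $\mathfrak D$ onto the $i$th edge of $\mathfrak C$ (and reshaping into a regular polygon). Concretely, an arc $(a,b)$ of $\mathfrak C$ becomes the arc $(\sigma(a),\sigma(b))$ of $\mathfrak E$, where $\sigma(v)=v$ if $v\le i$ and $\sigma(v)=v+m-1$ if $v>i$. An arc $(a,b)$ of $\mathfrak D$ becomes $(a+i-1,b+i-1)$. All these arcs keep their colours, except the arc $(i,i+m)$ of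 $\mathfrak E$ (the common image of the $i$th edge of $\mathfrak C$ and the base of $\mathfrak D$). This arc is red if both the $i$th edge of $\mathfrak C$ and the base of $\mathfrak D$ are uncoloured, blue if both are blue, and uncoloured otherwise. *)

theory Defs
  imports Main
begin

record bnc =
  sz :: nat
  blue :: "(nat \<times> nat) set"
  red :: "(nat \<times> nat) set"

definition arcs :: "nat \<Rightarrow> (nat \<times> nat) set" where
  "arcs n = {(i, j). 1 \<le> i \<and> i < j \<and> j \<le> n + 1}"

definition crossing :: "nat \<times> nat \<Rightarrow> nat \<times> nat \<Rightarrow> bool" where
  "crossing p q = (case p of (i, j) \<Rightarrow> case q of (k, l) \<Rightarrow>
      (i < k \<and> k < j \<and> j < l) \<or> (k < i \<and> i < l \<and> l < j))"

text \<open>Diagonals of a polygon of size n: arcs that are neither edges (i,i+1) nor the base (1,n+1).\<close>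
definition diagonals :: "nat \<Rightarrow> (nat \<times> nat) set" where
  "diagonals n = {(i, j) \<in> arcs n. j \<noteq> i + 1 \<and> (i, j) \<noteq> (1, n + 1)}"

definition bnc_unit :: bnc where
  "bnc_unit = \<lparr>sz = 1, blue = {(1, 2)}, red = {}\<rparr>"

definition is_bnc :: "bnc \<Rightarrow> bool" where
  "is_bnc C \<longleftrightarrow>
     (sz C = 1 \<and> C = bnc_unit) \<or>
     (sz C \<ge> 2 \<and> blue C \<subseteq> arcs (sz C) \<and> red C \<subseteq> arcs (sz C) \<and>
      blue C \<inter> red C = {} \<and>
      (\<forall>p \<in> blue C \<union> red C. \<forall>q \<in> blue C \<union> red C. \<not> crossing p q) \<and>
      red C \<subseteq> diagonals (sz C))"

definition BNC :: "bnc set" where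
  "BNC = {C. is_bnc C}"

text \<open>Partial composition C \<circ>_i D: glue the base of D onto the i-th edge of C.\<close>
definition bnc_comp :: "bnc \<Rightarrow> nat \<Rightarrow> bnc \<Rightarrow> bnc" where
  "bnc_comp C i D =
    (let n = sz C; m = sz D;
         \<sigma> = (\<lambda>v. if v \<le> i then v else v + m - 1);
         mapC = (\<lambda>(a, b). (\<sigma> a, \<sigma> b));
         mapD = (\<lambda>(a, b). (a + i - 1, b + i - 1));
         eC = (i, i + 1); bD = (1, m + 1); s = (i, i + m)
     in \<lparr>sz = n + m - 1,
         blue = mapC ` (blue C - {eC}) \<union> mapD ` (blue D - {bD}) \<union>
                (if eC \<in> blue C \<and> bD \<in> blue D then {s} else {}),
         red = mapC ` (red C - {eC}) \<union> mapD ` (red D - {bD}) \<union>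
                (if eC \<notin> blue C \<union> red C \<and> bD \<notin> blue D \<union> red D then {s} else {})\<rparr>)"

definition ns_operad :: "'a set \<Rightarrow> ('a \<Rightarrow> nat) \<Rightarrow> ('a \<Rightarrow> nat \<Rightarrow> 'a \<Rightarrow> 'a) \<Rightarrow> 'a \<Rightarrow> bool" where
  "ns_operad X ar cmp u \<longleftrightarrow>
     u \<in> X \<and> ar u = 1 \<and>
     (\<forall>x\<in>X. \<forall>y\<in>X. \<forall>i. 1 \<le> i \<and> i \<le> ar x \<longrightarrow>
        cmp x i y \<in> X \<and> ar (cmp x i y) = ar x + ar y - 1) \<and>
     (\<forall>x\<in>X. cmp u 1 x = x) \<and>
     (\<forall>x\<in>X. \<forall>i. 1 \<le> i \<and> i \<le> ar x \<longrightarrow> cmp x i u = x) \<and>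
     (\<forall>x\<in>X. \<forall>y\<in>X. \<forall>z\<in>X. \<forall>i j. 1 \<le> i \<and> i \<le> ar x \<and> 1 \<le> j \<and> j \<le> ar y \<longrightarrow>
        cmp (cmp x i y) (i + j - 1) z = cmp x i (cmp y j z)) \<and>
     (\<forall>x\<in>X. \<forall>y\<in>X. \<forall>z\<in>X. \<forall>i j. 1 \<le> i \<and> i < j \<and> j \<le> ar x \<longrightarrow>
        cmp (cmp x i y) (j + ar y - 1) z = cmp (cmp x j z) i y)"

end

(*
  Write m for the size of D. Every coloured arc of C \<circ>\<^sub>i D is an arc of C relabelled by the
  order embedding shift i m (the identity up to i, then a jump by m - 1), an arc of D translated
  by offset i, or the glued arc (i, i + m); so each colour class is a "graft" of the corresponding
  colour classes of C and D. Both relabellings are strictly monotone and hence preserve crossings,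
  and arcs coming from D lie in [i, i + m] while arcs coming from C have no endpoint strictly
  inside it: this gives closure under composition. The associativity laws reduce to composition
  identities between the relabellings, together with the fact that the edge (or base) consumed by
  the outer grafting is the image of an edge (or the base) of the inner factor, so the colour of
  the new glued arc can be read off in that factor.
*)

theory Submission
  imports Defs
begin

section \<open>Vertex relabellings\<close>

lemma inj_map_prod_strict_mono:
  "strict_mono (f :: 'a::linorder \<Rightarrow> 'b::order) \<Longrightarrow> inj (map_prod f f)"
  by (metis prod.inj_map strict_mono_imp_inj_on)

lemma image_Diff_singleton_inj: "inj f \<Longrightarrow> f ` A - {f x} = f ` (A - {x})"
  by (simp add: image_set_diff)

lemma image_map_prod_comp: "map_prod f f ` map_prod g g ` A = map_prod (f \<circ> g) (f \<circ> g) ` A"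
  by (simp add: image_comp map_prod_compose)

lemma map_prod_image_cong:
  assumes "\<And>a b. (a, b) \<in> X \<Longrightarrow> f a = f' a \<and> f b = f' b"
  shows "map_prod f f ` X = map_prod f' f' ` X"
proof (rule image_cong[OF refl])
  fix x assume "x \<in> X"
  then show "map_prod f f x = map_prod f' f' x"
    using assms by (cases x) simp
qed

lemma map_prod_image_subset:
  "(\<And>a b. (a, b) \<in> A \<Longrightarrow> (f a, f b) \<in> X) \<Longrightarrow> map_prod f f ` A \<subseteq> X"
  by auto

definition shift :: "nat \<Rightarrow> nat \<Rightarrow> nat \<Rightarrow> nat" where
  "shift i m v = (if v \<le> i then v else v + m - 1)"

definition offset :: "nat \<Rightarrow> nat \<Rightarrow> nat" where
  "offset i v = v + i - 1"

lemma strict_mono_shift: "1 \<le> m \<Longrightarrow> strict_mono (shift i m)"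
  by (auto simp: strict_mono_def shift_def)

lemma strict_mono_offset: "1 \<le> i \<Longrightarrow> strict_mono (offset i)"
  by (auto simp: strict_mono_def offset_def)

lemma shift_shift_nested:
  "1 \<le> j \<Longrightarrow> j \<le> m \<Longrightarrow> 1 \<le> p \<Longrightarrow> shift (i + j - 1) p (shift i m v) = shift i (m + p - 1) v"
  by (auto simp: shift_def)

lemma shift_offset_nested:
  "1 \<le> i \<Longrightarrow> shift (i + j - 1) p (offset i v) = offset i (shift j p v)"
  by (auto simp: shift_def offset_def)

lemma offset_offset:
  "1 \<le> i \<Longrightarrow> 1 \<le> j \<Longrightarrow> offset i (offset j v) = offset (i + j - 1) v"
  by (auto simp: offset_def)

lemma shift_shift_parallel:
  "i < j \<Longrightarrow> 1 \<le> m \<Longrightarrow> 1 \<le> p \<Longrightarrow> shift (j + m - 1) p (shift i m v) = shift i m (shift j p v)"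
  by (auto simp: shift_def)

lemma shift_fixes_offset:
  "i < j \<Longrightarrow> v \<le> m + 1 \<Longrightarrow> shift (j + m - 1) p (offset i v) = offset i v"
  by (auto simp: shift_def offset_def)

lemma shift_offset_parallel:
  "i < j \<Longrightarrow> 1 \<le> v \<Longrightarrow> 1 \<le> m \<Longrightarrow> shift i m (offset j v) = offset (j + m - 1) v"
  by (auto simp: shift_def offset_def)

section \<open>Grafting arc sets\<close>

text \<open>One colour class of \<open>C \<circ>\<^sub>i D\<close> with \<open>m = sz D\<close>: \<open>A\<close> and \<open>B\<close> are the arcs of that
  colour in \<open>C\<close> and \<open>D\<close>, and \<open>g\<close> says whether the glued arc \<open>(i, i + m)\<close> gets it.\<close>

definition graft ::
    "nat \<Rightarrow> nat \<Rightarrow> (nat \<times> nat) set \<Rightarrow> (nat \<times> nat) set \<Rightarrow> bool \<Rightarrow> (nat \<times> nat) set" where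
  "graft i m A B g =
     map_prod (shift i m) (shift i m) ` (A - {(i, i + 1)}) \<union>
     map_prod (offset i) (offset i) ` (B - {(1, m + 1)}) \<union>
     (if g then {(i, i + m)} else {})"

lemma sz_bnc_comp [simp]: "sz (bnc_comp C i D) = sz C + sz D - 1"
  by (simp add: bnc_comp_def Let_def)

lemma blue_bnc_comp:
  "blue (bnc_comp C i D) =
     graft i (sz D) (blue C) (blue D) ((i, i + 1) \<in> blue C \<and> (1, sz D + 1) \<in> blue D)"
  by (simp add: bnc_comp_def Let_def graft_def shift_def offset_def map_prod_def)

lemma red_bnc_comp:
  "red (bnc_comp C i D) =
     graft i (sz D) (red C) (red D)
       ((i, i + 1) \<notin> blue C \<union> red C \<and> (1, sz D + 1) \<notin> blue D \<union> red D)"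
  by (simp add: bnc_comp_def Let_def graft_def shift_def offset_def map_prod_def)

lemma inner_edge_notin_shift_image:
  assumes "1 \<le> j" "j \<le> m" "2 \<le> m"
  shows "(i + j - 1, i + j) \<notin> map_prod (shift i m) (shift i m) ` A"
proof
  assume "(i + j - 1, i + j) \<in> map_prod (shift i m) (shift i m) ` A"
  then obtain a b where "shift i m a = i + j - 1" "shift i m b = i + j" by auto
  then show False using assms by (auto simp: shift_def split: if_splits)
qed

lemma graft_Diff_inner_edge:
  assumes "1 \<le> i" "1 \<le> j" "j \<le> m" "2 \<le> m"
  shows "graft i m A B g - {(i + j - 1, i + j)} =
    map_prod (shift i m) (shift i m) ` (A - {(i, i + 1)}) \<union>
    map_prod (offset i) (offset i) ` (B - {(1, m + 1), (j, j + 1)}) \<union>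
    (if g then {(i, i + m)} else {})"
proof -
  have edge: "(i + j - 1, i + j) = map_prod (offset i) (offset i) (j, j + 1)"
    using assms by (simp add: offset_def)
  have "map_prod (offset i) (offset i) ` (B - {(1, m + 1)}) - {(i + j - 1, i + j)} =
      map_prod (offset i) (offset i) ` (B - {(1, m + 1)} - {(j, j + 1)})"
    using image_Diff_singleton_inj[OF inj_map_prod_strict_mono[OF strict_mono_offset[OF assms(1)]]]
    by (simp only: edge)
  moreover have "B - {(1, m + 1)} - {(j, j + 1)} = B - {(1, m + 1), (j, j + 1)}"
    by auto
  moreover have "(i + j - 1, i + j) \<noteq> (i, i + m)"
    using assms by auto
  ultimately show ?thesis
    using inner_edge_notin_shift_image[OF assms(2-4), of i]
    by (simp add: graft_def Un_Diff)
qed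

lemma inner_edge_in_graft:
  assumes "1 \<le> i" "1 \<le> j" "j \<le> m" "2 \<le> m"
  shows "(i + j - 1, i + j) \<in> graft i m A B g \<longleftrightarrow> (j, j + 1) \<in> B"
proof -
  have edge: "(i + j - 1, i + j) = map_prod (offset i) (offset i) (j, j + 1)"
    using assms by (simp add: offset_def)
  have "(i + j - 1, i + j) \<in> graft i m A B g \<longleftrightarrow>
      (i + j - 1, i + j) \<in> map_prod (offset i) (offset i) ` (B - {(1, m + 1)})"
    using inner_edge_notin_shift_image[OF assms(2-4), of i] assms by (auto simp: graft_def)
  also have "\<dots> \<longleftrightarrow> (j, j + 1) \<in> B - {(1, m + 1)}"
    unfolding edge by (rule inj_image_mem_iff[OF inj_map_prod_strict_mono[OF strict_mono_offset[OF assms(1)]]])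
  also have "\<dots> \<longleftrightarrow> (j, j + 1) \<in> B"
    using assms by auto
  finally show ?thesis .
qed

lemma base_notin_offset_image:
  assumes "E \<subseteq> arcs p" "1 \<le> j" "2 \<le> m"
  shows "(1, m + p) \<notin> map_prod (offset j) (offset j) ` E"
proof
  assume "(1, m + p) \<in> map_prod (offset j) (offset j) ` E"
  then obtain a b where "(a, b) \<in> arcs p" "offset j a = 1" "offset j b = m + p"
    using assms(1) by auto
  then show False using assms by (auto simp: offset_def arcs_def)
qed

lemma graft_Diff_base:
  assumes "1 \<le> j" "j \<le> m" "2 \<le> m" "1 \<le> p" "E \<subseteq> arcs p"
  shows "graft j p B E h - {(1, m + p)} =
    map_prod (shift j p) (shift j p) ` (B - {(1, m + 1), (j, j + 1)}) \<union>
    map_prod (offset j) (offset j) ` (E - {(1, p + 1)}) \<union>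
    (if h then {(j, j + p)} else {})"
proof -
  have base: "(1, m + p) = map_prod (shift j p) (shift j p) (1, m + 1)"
    using assms by (simp add: shift_def)
  have "map_prod (shift j p) (shift j p) ` (B - {(j, j + 1)}) - {(1, m + p)} =
      map_prod (shift j p) (shift j p) ` (B - {(j, j + 1)} - {(1, m + 1)})"
    using image_Diff_singleton_inj[OF inj_map_prod_strict_mono[OF strict_mono_shift[OF assms(4)]]]
    by (simp only: base)
  moreover have "B - {(j, j + 1)} - {(1, m + 1)} = B - {(1, m + 1), (j, j + 1)}"
    by auto
  moreover have "(1, m + p) \<noteq> (j, j + p)"
    using assms by auto
  moreover have "(1, m + p) \<notin> map_prod (offset j) (offset j) ` (E - {(1, p + 1)})"
    using assms(5) by (intro base_notin_offset_image[OF _ assms(1,3)]) blast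
  ultimately show ?thesis
    by (simp add: graft_def Un_Diff)
qed

lemma base_in_graft:
  assumes "1 \<le> j" "j \<le> m" "2 \<le> m" "1 \<le> p" "E \<subseteq> arcs p"
  shows "(1, m + p) \<in> graft j p B E h \<longleftrightarrow> (1, m + 1) \<in> B"
proof -
  have base: "(1, m + p) = map_prod (shift j p) (shift j p) (1, m + 1)"
    using assms by (simp add: shift_def)
  have "(1, m + p) \<in> graft j p B E h \<longleftrightarrow>
      (1, m + p) \<in> map_prod (shift j p) (shift j p) ` (B - {(j, j + 1)})"
  proof -
    have "(1, m + p) \<notin> map_prod (offset j) (offset j) ` (E - {(1, p + 1)})"
      using assms(5) by (intro base_notin_offset_image[OF _ assms(1,3)]) blast
    moreover have "(1, m + p) \<noteq> (j, j + p)"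
      using assms by auto
    ultimately show ?thesis
      by (auto simp: graft_def)
  qed
  also have "\<dots> \<longleftrightarrow> (1, m + 1) \<in> B - {(j, j + 1)}"
    unfolding base by (rule inj_image_mem_iff[OF inj_map_prod_strict_mono[OF strict_mono_shift[OF assms(4)]]])
  also have "\<dots> \<longleftrightarrow> (1, m + 1) \<in> B"
    using assms by auto
  finally show ?thesis .
qed

lemma graft_assoc_nested:
  assumes "1 \<le> i" "1 \<le> j" "j \<le> m" "2 \<le> m" "1 \<le> p" "E \<subseteq> arcs p"
  shows "graft (i + j - 1) p (graft i m A B g) E h = graft i (m + p - 1) A (graft j p B E h) g"
proof -
  have shifts: "shift (i + j - 1) p \<circ> shift i m = shift i (m + p - 1)"
    using shift_shift_nested[OF assms(2,3,5)] by auto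
  have shift_offset: "shift (i + j - 1) p \<circ> offset i = offset i \<circ> shift j p"
    using shift_offset_nested[OF assms(1)] by auto
  have offsets: "offset (i + j - 1) = offset i \<circ> offset j"
    using offset_offset[OF assms(1,2)] by auto
  have "i + j - 1 + 1 = i + j"
    using assms by simp
  then have "graft (i + j - 1) p (graft i m A B g) E h =
      map_prod (shift (i + j - 1) p) (shift (i + j - 1) p) ` (graft i m A B g - {(i + j - 1, i + j)}) \<union>
      map_prod (offset (i + j - 1)) (offset (i + j - 1)) ` (E - {(1, p + 1)}) \<union>
      (if h then {(i + j - 1, i + j - 1 + p)} else {})"
    by (simp only: graft_def[of "i + j - 1" p "graft i m A B g"])
  also have "\<dots> = map_prod (shift i (m + p - 1)) (shift i (m + p - 1)) ` (A - {(i, i + 1)}) \<union>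
      map_prod (offset i) (offset i) `
        (map_prod (shift j p) (shift j p) ` (B - {(1, m + 1), (j, j + 1)}) \<union>
         map_prod (offset j) (offset j) ` (E - {(1, p + 1)}) \<union>
         (if h then {(j, j + p)} else {})) \<union>
      (if g then {(i, i + (m + p - 1))} else {})"
    unfolding graft_Diff_inner_edge[OF assms(1-4)] image_Un image_map_prod_comp
      shifts shift_offset offsets
    using assms by (cases g; cases h) (auto simp: shift_def offset_def)
  also have "\<dots> = graft i (m + p - 1) A (graft j p B E h) g"
  proof -
    have "m + p - 1 + 1 = m + p"
      using assms by simp
    then show ?thesis
      unfolding graft_def[of i "m + p - 1" A] by (simp only: graft_Diff_base[OF assms(2-6)])
  qed
  finally show ?thesis .
qed

lemma graft_Diff_later_edge:
  assumes "i < j" "1 \<le> m" "B \<subseteq> arcs m"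
  shows "graft i m A B g - {(j + m - 1, j + m)} =
    map_prod (shift i m) (shift i m) ` (A - {(i, i + 1), (j, j + 1)}) \<union>
    map_prod (offset i) (offset i) ` (B - {(1, m + 1)}) \<union>
    (if g then {(i, i + m)} else {})"
proof -
  have edge: "(j + m - 1, j + m) = map_prod (shift i m) (shift i m) (j, j + 1)"
    using assms by (simp add: shift_def)
  have "map_prod (shift i m) (shift i m) ` (A - {(i, i + 1)}) - {(j + m - 1, j + m)} =
      map_prod (shift i m) (shift i m) ` (A - {(i, i + 1)} - {(j, j + 1)})"
    using image_Diff_singleton_inj[OF inj_map_prod_strict_mono[OF strict_mono_shift[OF assms(2)]]]
    by (simp only: edge)
  moreover have "A - {(i, i + 1)} - {(j, j + 1)} = A - {(i, i + 1), (j, j + 1)}"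
    by auto
  moreover have "(j + m - 1, j + m) \<notin> map_prod (offset i) (offset i) ` (B - {(1, m + 1)})"
    using assms by (force simp: offset_def arcs_def)
  moreover have "(j + m - 1, j + m) \<noteq> (i, i + m)"
    using assms by auto
  ultimately show ?thesis
    by (simp add: graft_def Un_Diff)
qed

lemma later_edge_in_graft:
  assumes "i < j" "1 \<le> m" "B \<subseteq> arcs m"
  shows "(j + m - 1, j + m) \<in> graft i m A B g \<longleftrightarrow> (j, j + 1) \<in> A"
proof -
  have edge: "(j + m - 1, j + m) = map_prod (shift i m) (shift i m) (j, j + 1)"
    using assms by (simp add: shift_def)
  have "(j + m - 1, j + m) \<notin> map_prod (offset i) (offset i) ` (B - {(1, m + 1)})"
    using assms by (force simp: offset_def arcs_def)
  moreover have "(j + m - 1, j + m) \<noteq> (i, i + m)"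
    using assms by auto
  ultimately have "(j + m - 1, j + m) \<in> graft i m A B g \<longleftrightarrow>
      (j + m - 1, j + m) \<in> map_prod (shift i m) (shift i m) ` (A - {(i, i + 1)})"
    by (auto simp: graft_def)
  also have "\<dots> \<longleftrightarrow> (j, j + 1) \<in> A - {(i, i + 1)}"
    unfolding edge by (rule inj_image_mem_iff[OF inj_map_prod_strict_mono[OF strict_mono_shift[OF assms(2)]]])
  also have "\<dots> \<longleftrightarrow> (j, j + 1) \<in> A"
    using assms by auto
  finally show ?thesis .
qed

lemma graft_Diff_earlier_edge:
  assumes "i < j" "1 \<le> p" "E \<subseteq> arcs p"
  shows "graft j p A E h - {(i, i + 1)} =
    map_prod (shift j p) (shift j p) ` (A - {(i, i + 1), (j, j + 1)}) \<union>
    map_prod (offset j) (offset j) ` (E - {(1, p + 1)}) \<union>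
    (if h then {(j, j + p)} else {})"
proof -
  have edge: "(i, i + 1) = map_prod (shift j p) (shift j p) (i, i + 1)"
    using assms by (simp add: shift_def)
  have "map_prod (shift j p) (shift j p) ` (A - {(j, j + 1)}) - {(i, i + 1)} =
      map_prod (shift j p) (shift j p) ` (A - {(j, j + 1)} - {(i, i + 1)})"
    using image_Diff_singleton_inj[OF inj_map_prod_strict_mono[OF strict_mono_shift[OF assms(2)]]]
    by (metis edge)
  moreover have "A - {(j, j + 1)} - {(i, i + 1)} = A - {(i, i + 1), (j, j + 1)}"
    by auto
  moreover have "(i, i + 1) \<notin> map_prod (offset j) (offset j) ` (E - {(1, p + 1)})"
    using assms by (force simp: offset_def arcs_def)
  moreover have "(i, i + 1) \<noteq> (j, j + p)"
    using assms by auto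
  ultimately show ?thesis
    by (simp add: graft_def Un_Diff)
qed

lemma earlier_edge_in_graft:
  assumes "i < j" "1 \<le> p" "E \<subseteq> arcs p"
  shows "(i, i + 1) \<in> graft j p A E h \<longleftrightarrow> (i, i + 1) \<in> A"
proof -
  have edge: "(i, i + 1) = map_prod (shift j p) (shift j p) (i, i + 1)"
    using assms by (simp add: shift_def)
  have "(i, i + 1) \<notin> map_prod (offset j) (offset j) ` (E - {(1, p + 1)})"
    using assms by (force simp: offset_def arcs_def)
  moreover have "(i, i + 1) \<noteq> (j, j + p)"
    using assms by auto
  ultimately have "(i, i + 1) \<in> graft j p A E h \<longleftrightarrow>
      (i, i + 1) \<in> map_prod (shift j p) (shift j p) ` (A - {(j, j + 1)})"
    by (auto simp: graft_def)
  also have "\<dots> \<longleftrightarrow> (i, i + 1) \<in> A - {(j, j + 1)}"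
    by (subst edge) (rule inj_image_mem_iff[OF inj_map_prod_strict_mono[OF strict_mono_shift[OF assms(2)]]])
  also have "\<dots> \<longleftrightarrow> (i, i + 1) \<in> A"
    using assms by auto
  finally show ?thesis .
qed

lemma graft_assoc_parallel:
  assumes "1 \<le> i" "i < j" "1 \<le> m" "1 \<le> p" "B \<subseteq> arcs m" "E \<subseteq> arcs p"
  shows "graft (j + m - 1) p (graft i m A B g) E h = graft i m (graft j p A E h) B g"
proof -
  have shifts: "shift (j + m - 1) p \<circ> shift i m = shift i m \<circ> shift j p"
    using shift_shift_parallel[OF assms(2-4)] by auto
  have shift_offset: "map_prod (shift (j + m - 1) p \<circ> offset i) (shift (j + m - 1) p \<circ> offset i) `
      (B - {(1, m + 1)}) = map_prod (offset i) (offset i) ` (B - {(1, m + 1)})"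
    using assms(5) shift_fixes_offset[OF assms(2)]
    by (intro map_prod_image_cong) (auto simp: arcs_def)
  have offsets: "map_prod (offset (j + m - 1)) (offset (j + m - 1)) ` (E - {(1, p + 1)}) =
      map_prod (shift i m \<circ> offset j) (shift i m \<circ> offset j) ` (E - {(1, p + 1)})"
    using assms(6) shift_offset_parallel[OF assms(2) _ assms(3)]
    by (intro map_prod_image_cong) (auto simp: arcs_def)
  have "j + m - 1 + 1 = j + m"
    using assms by simp
  then have "graft (j + m - 1) p (graft i m A B g) E h =
      map_prod (shift (j + m - 1) p) (shift (j + m - 1) p) ` (graft i m A B g - {(j + m - 1, j + m)}) \<union>
      map_prod (offset (j + m - 1)) (offset (j + m - 1)) ` (E - {(1, p + 1)}) \<union>
      (if h then {(j + m - 1, j + m - 1 + p)} else {})"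
    by (simp only: graft_def[of "j + m - 1" p "graft i m A B g"])
  also have "\<dots> = map_prod (shift i m) (shift i m) `
        (map_prod (shift j p) (shift j p) ` (A - {(i, i + 1), (j, j + 1)}) \<union>
         map_prod (offset j) (offset j) ` (E - {(1, p + 1)}) \<union>
         (if h then {(j, j + p)} else {})) \<union>
      map_prod (offset i) (offset i) ` (B - {(1, m + 1)}) \<union>
      (if g then {(i, i + m)} else {})"
    unfolding graft_Diff_later_edge[OF assms(2,3,5)] image_Un image_map_prod_comp
      shifts shift_offset offsets
    using assms by (cases g; cases h) (auto simp: shift_def)
  also have "\<dots> = graft i m (graft j p A E h) B g"
    by (simp only: graft_def[of i m "graft j p A E h"] graft_Diff_earlier_edge[OF assms(2,4,6)])
  finally show ?thesis .
qed

lemma graft_unit_left: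
  assumes "A \<subseteq> {(1, 2)}"
  shows "graft 1 m A B g = B - {(1, m + 1)} \<union> (if g then {(1, m + 1)} else {})"
proof -
  have "offset 1 = id"
    by (simp add: fun_eq_iff offset_def)
  then show ?thesis
    using assms by (auto simp: graft_def map_prod.id)
qed

lemma graft_unit_right:
  assumes "B \<subseteq> {(1, 2)}"
  shows "graft i 1 A B g = A - {(i, i + 1)} \<union> (if g then {(i, i + 1)} else {})"
proof -
  have "shift i 1 = id"
    by (simp add: fun_eq_iff shift_def)
  then show ?thesis
    using assms by (auto simp: graft_def map_prod.id)
qed

section \<open>Well-formedness of grafts\<close>

lemma shift_arc:
  "(a, b) \<in> arcs n \<Longrightarrow> i \<le> n \<Longrightarrow> 1 \<le> m \<Longrightarrow> (shift i m a, shift i m b) \<in> arcs (n + m - 1)"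
  by (auto simp: arcs_def shift_def)

lemma offset_arc:
  "(a, b) \<in> arcs m \<Longrightarrow> 1 \<le> i \<Longrightarrow> i \<le> n \<Longrightarrow> (offset i a, offset i b) \<in> arcs (n + m - 1)"
  by (auto simp: arcs_def offset_def)

lemma shift_diagonal:
  "(a, b) \<in> diagonals n \<Longrightarrow> 1 \<le> i \<Longrightarrow> i \<le> n \<Longrightarrow> 1 \<le> m \<Longrightarrow>
    (shift i m a, shift i m b) \<in> diagonals (n + m - 1)"
  by (auto simp: diagonals_def arcs_def shift_def)

lemma offset_diagonal:
  "(a, b) \<in> diagonals m \<Longrightarrow> 1 \<le> i \<Longrightarrow> i \<le> n \<Longrightarrow>
    (offset i a, offset i b) \<in> diagonals (n + m - 1)"
  by (auto simp: diagonals_def arcs_def offset_def)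

lemma graft_subset_arcs:
  assumes "A \<subseteq> arcs n" "B \<subseteq> arcs m" "1 \<le> i" "i \<le> n" "1 \<le> m"
  shows "graft i m A B g \<subseteq> arcs (n + m - 1)"
proof -
  have "map_prod (shift i m) (shift i m) ` (A - {(i, i + 1)}) \<subseteq> arcs (n + m - 1)"
    using assms(1,4,5) by (intro map_prod_image_subset shift_arc) auto
  moreover have "map_prod (offset i) (offset i) ` (B - {(1, m + 1)}) \<subseteq> arcs (n + m - 1)"
    using assms(2-4) by (intro map_prod_image_subset offset_arc) auto
  moreover have "(i, i + m) \<in> arcs (n + m - 1)"
    using assms by (auto simp: arcs_def)
  ultimately show ?thesis
    by (simp add: graft_def)
qed

lemma graft_subset_diagonals:
  assumes "A \<subseteq> diagonals n" "B \<subseteq> diagonals m" "1 \<le> i" "i \<le> n" "1 \<le> m"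
    and "g \<Longrightarrow> 2 \<le> n \<and> 2 \<le> m"
  shows "graft i m A B g \<subseteq> diagonals (n + m - 1)"
proof -
  have "map_prod (shift i m) (shift i m) ` (A - {(i, i + 1)}) \<subseteq> diagonals (n + m - 1)"
    using assms(1,3-5) by (intro map_prod_image_subset shift_diagonal) auto
  moreover have "map_prod (offset i) (offset i) ` (B - {(1, m + 1)}) \<subseteq> diagonals (n + m - 1)"
    using assms(2-4) by (intro map_prod_image_subset offset_diagonal) auto
  moreover have "g \<Longrightarrow> (i, i + m) \<in> diagonals (n + m - 1)"
    using assms by (auto simp: diagonals_def arcs_def)
  ultimately show ?thesis
    by (simp add: graft_def)
qed

definition noncrossing :: "(nat \<times> nat) set \<Rightarrow> bool" where
  "noncrossing S \<longleftrightarrow> (\<forall>p \<in> S. \<forall>q \<in> S. \<not> crossing p q)"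

lemma crossing_sym: "crossing p q \<longleftrightarrow> crossing q p"
  by (cases p; cases q) (auto simp: crossing_def)

lemma not_crossing_edge: "\<not> crossing (i, i + 1) q"
  by (cases q) (auto simp: crossing_def)

lemma crossing_map_prod:
  "strict_mono f \<Longrightarrow> crossing (map_prod f f p) (map_prod f f q) \<longleftrightarrow> crossing p q"
  by (cases p; cases q) (simp add: crossing_def strict_mono_less)

lemma noncrossing_image:
  "strict_mono f \<Longrightarrow> noncrossing (map_prod f f ` S) \<longleftrightarrow> noncrossing S"
  by (simp add: noncrossing_def crossing_map_prod)

lemma noncrossing_subset: "noncrossing T \<Longrightarrow> S \<subseteq> T \<Longrightarrow> noncrossing S"
  by (auto simp: noncrossing_def)

lemma noncrossing_insert_edge: "noncrossing S \<Longrightarrow> noncrossing (insert (i, i + 1) S)"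
  unfolding noncrossing_def by (metis crossing_sym insert_iff not_crossing_edge)

lemma noncrossing_Un_nested:
  assumes "noncrossing S" "noncrossing T"
    and outside: "\<And>a b. (a, b) \<in> S \<Longrightarrow> (a \<le> l \<or> r \<le> a) \<and> (b \<le> l \<or> r \<le> b)"
    and inside: "\<And>c d. (c, d) \<in> T \<Longrightarrow> l \<le> c \<and> d \<le> r"
  shows "noncrossing (S \<union> T)"
proof -
  have "\<not> crossing p q" if "p \<in> S" "q \<in> T" for p q
    using outside[of "fst p" "snd p"] inside[of "fst q" "snd q"] that
    by (cases p; cases q) (auto simp: crossing_def)
  then show ?thesis
    using assms(1,2) unfolding noncrossing_def by (metis Un_iff crossing_sym)
qed

lemma graft_Un:
  "graft i m A B g \<union> graft i m A' B' g' = graft i m (A \<union> A') (B \<union> B') (g \<or> g')"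
  by (auto simp: graft_def)

lemma graft_subset_images:
  "graft i m A B g \<subseteq>
    map_prod (shift i m) (shift i m) ` insert (i, i + 1) A \<union> map_prod (offset i) (offset i) ` B"
proof -
  have "map_prod (shift i m) (shift i m) ` (A - {(i, i + 1)}) \<subseteq>
      map_prod (shift i m) (shift i m) ` insert (i, i + 1) A"
    by (rule image_mono) blast
  moreover have "map_prod (offset i) (offset i) ` (B - {(1, m + 1)}) \<subseteq> map_prod (offset i) (offset i) ` B"
    by (rule image_mono) blast
  moreover have "(i, i + m) \<in> map_prod (shift i m) (shift i m) ` insert (i, i + 1) A"
    by (simp add: shift_def)
  ultimately show ?thesis
    unfolding graft_def by (split if_split) blast
qed

lemma graft_noncrossing:
  assumes "noncrossing A" "noncrossing B" "B \<subseteq> arcs m" "1 \<le> i" "1 \<le> m"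
  shows "noncrossing (graft i m A B g)"
proof (rule noncrossing_subset[OF _ graft_subset_images])
  show "noncrossing (map_prod (shift i m) (shift i m) ` insert (i, i + 1) A \<union>
      map_prod (offset i) (offset i) ` B)"
  proof (rule noncrossing_Un_nested[where l = i and r = "i + m"])
    show "noncrossing (map_prod (shift i m) (shift i m) ` insert (i, i + 1) A)"
      using assms(1) noncrossing_insert_edge
      by (simp only: noncrossing_image[OF strict_mono_shift[OF assms(5)]])
    show "noncrossing (map_prod (offset i) (offset i) ` B)"
      using assms(2) by (simp only: noncrossing_image[OF strict_mono_offset[OF assms(4)]])
    show "(a \<le> i \<or> i + m \<le> a) \<and> (b \<le> i \<or> i + m \<le> b)"
      if "(a, b) \<in> map_prod (shift i m) (shift i m) ` insert (i, i + 1) A" for a b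
      using that by (auto simp: shift_def)
    show "i \<le> c \<and> d \<le> i + m" if "(c, d) \<in> map_prod (offset i) (offset i) ` B" for c d
      using that assms(3) by (auto simp: offset_def arcs_def)
  qed
qed

lemma glue_notin_shift_image:
  assumes "1 \<le> m"
  shows "(i, i + m) \<notin> map_prod (shift i m) (shift i m) ` (A - {(i, i + 1)})"
proof -
  have glue: "(i, i + m) = map_prod (shift i m) (shift i m) (i, i + 1)"
    by (simp add: shift_def)
  show ?thesis
    unfolding glue inj_image_mem_iff[OF inj_map_prod_strict_mono[OF strict_mono_shift[OF assms]]]
    by simp
qed

lemma glue_notin_offset_image:
  assumes "1 \<le> i"
  shows "(i, i + m) \<notin> map_prod (offset i) (offset i) ` (B - {(1, m + 1)})"
proof -
  have glue: "(i, i + m) = map_prod (offset i) (offset i) (1, m + 1)"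
    using assms by (simp add: offset_def)
  show ?thesis
    unfolding glue inj_image_mem_iff[OF inj_map_prod_strict_mono[OF strict_mono_offset[OF assms]]]
    by simp
qed

lemma shift_image_disjoint_offset_image:
  assumes "A \<subseteq> arcs n" "B \<subseteq> arcs m"
  shows "map_prod (shift i m) (shift i m) ` (A - {(i, i + 1)}) \<inter> map_prod (offset i) (offset i) ` B = {}"
proof -
  have False if "(a, b) \<in> A" "(a, b) \<noteq> (i, i + 1)" "(c, d) \<in> B"
    and "shift i m a = offset i c" "shift i m b = offset i d" for a b c d
    using that assms by (auto simp: shift_def offset_def arcs_def split: if_splits)
  then show ?thesis
    by fastforce
qed

lemma graft_disjoint:
  assumes "A \<subseteq> arcs n" "A' \<subseteq> arcs n" "B \<subseteq> arcs m" "B' \<subseteq> arcs m" "1 \<le> i" "1 \<le> m"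
    and "A \<inter> A' = {}" "B \<inter> B' = {}" "\<not> (g \<and> g')"
  shows "graft i m A B g \<inter> graft i m A' B' g' = {}"
proof -
  have inj_shift: "inj (map_prod (shift i m) (shift i m))"
    by (rule inj_map_prod_strict_mono[OF strict_mono_shift[OF assms(6)]])
  have inj_offset: "inj (map_prod (offset i) (offset i))"
    by (rule inj_map_prod_strict_mono[OF strict_mono_offset[OF assms(5)]])
  have "map_prod (shift i m) (shift i m) ` (A - {(i, i + 1)}) \<inter>
      map_prod (shift i m) (shift i m) ` (A' - {(i, i + 1)}) = {}"
    unfolding image_Int[OF inj_shift, symmetric] using assms(7) by blast
  moreover have "map_prod (offset i) (offset i) ` (B - {(1, m + 1)}) \<inter>
      map_prod (offset i) (offset i) ` (B' - {(1, m + 1)}) = {}"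
    unfolding image_Int[OF inj_offset, symmetric] using assms(8) by blast
  moreover have "map_prod (shift i m) (shift i m) ` (A - {(i, i + 1)}) \<inter>
      map_prod (offset i) (offset i) ` (B' - {(1, m + 1)}) = {}"
    using assms(1,4) by (intro shift_image_disjoint_offset_image) auto
  moreover have "map_prod (shift i m) (shift i m) ` (A' - {(i, i + 1)}) \<inter>
      map_prod (offset i) (offset i) ` (B - {(1, m + 1)}) = {}"
    using assms(2,3) by (intro shift_image_disjoint_offset_image) auto
  ultimately show ?thesis
    using assms(9) glue_notin_shift_image[OF assms(6)] glue_notin_offset_image[OF assms(5)]
    unfolding graft_def by (cases g; cases g') (simp_all add: Int_Un_distrib Int_Un_distrib2 Int_commute)
qed

section \<open>The operad of bicoloured noncrossing configurations\<close>

lemma diagonals_subset_arcs: "diagonals n \<subseteq> arcs n"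
  by (auto simp: diagonals_def)

lemma sz_bnc_unit [simp]: "sz bnc_unit = 1"
  and blue_bnc_unit [simp]: "blue bnc_unit = {(1, 2)}"
  and red_bnc_unit [simp]: "red bnc_unit = {}"
  by (simp_all add: bnc_unit_def)

lemma bnc_unit_in_BNC: "bnc_unit \<in> BNC"
  by (simp add: BNC_def is_bnc_def)

lemma
  assumes "C \<in> BNC"
  shows BNC_sz_pos: "1 \<le> sz C"
    and BNC_blue_arcs: "blue C \<subseteq> arcs (sz C)"
    and BNC_red_diagonals: "red C \<subseteq> diagonals (sz C)"
    and BNC_red_arcs: "red C \<subseteq> arcs (sz C)"
    and BNC_disjoint: "blue C \<inter> red C = {}"
    and BNC_noncrossing: "noncrossing (blue C \<union> red C)"
    and BNC_sz_one: "sz C = 1 \<Longrightarrow> C = bnc_unit"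
proof -
  have "noncrossing {(1, 2)}"
    by (simp add: noncrossing_def crossing_def)
  moreover have "{(1, 2)} \<subseteq> arcs 1"
    by (simp add: arcs_def)
  ultimately show "1 \<le> sz C" "blue C \<subseteq> arcs (sz C)" "red C \<subseteq> diagonals (sz C)"
    "blue C \<inter> red C = {}" "noncrossing (blue C \<union> red C)" "sz C = 1 \<Longrightarrow> C = bnc_unit"
    using assms by (auto simp: BNC_def is_bnc_def noncrossing_def)
  then show "red C \<subseteq> arcs (sz C)"
    using diagonals_subset_arcs by blast
qed

lemma BNC_I:
  assumes "2 \<le> sz C" "blue C \<subseteq> arcs (sz C)" "red C \<subseteq> diagonals (sz C)"
    "blue C \<inter> red C = {}" "noncrossing (blue C \<union> red C)"
  shows "C \<in> BNC"
proof -
  have "red C \<subseteq> arcs (sz C)"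
    using assms(3) diagonals_subset_arcs by blast
  then show ?thesis
    using assms by (auto simp: BNC_def is_bnc_def noncrossing_def)
qed

lemma bnc_comp_unit_left:
  assumes "C \<in> BNC"
  shows "bnc_comp bnc_unit 1 C = C"
proof (rule bnc.equality)
  have "(1, sz C + 1) \<notin> red C"
    using BNC_red_diagonals[OF assms] by (auto simp: diagonals_def)
  then show "red (bnc_comp bnc_unit 1 C) = red C"
    unfolding red_bnc_comp red_bnc_unit graft_unit_left[OF empty_subsetI] by auto
  show "blue (bnc_comp bnc_unit 1 C) = blue C"
    unfolding blue_bnc_comp blue_bnc_unit graft_unit_left[OF subset_refl] by auto
qed simp_all

lemma bnc_comp_unit_right:
  assumes "C \<in> BNC" "1 \<le> i" "i \<le> sz C"
  shows "bnc_comp C i bnc_unit = C"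
proof (rule bnc.equality)
  have "(i, i + 1) \<notin> red C"
    using BNC_red_diagonals[OF assms(1)] by (auto simp: diagonals_def)
  then show "red (bnc_comp C i bnc_unit) = red C"
    unfolding red_bnc_comp red_bnc_unit sz_bnc_unit graft_unit_right[OF empty_subsetI] by auto
  show "blue (bnc_comp C i bnc_unit) = blue C"
    unfolding blue_bnc_comp blue_bnc_unit sz_bnc_unit graft_unit_right[OF subset_refl] by auto
qed simp_all

lemma bnc_comp_closed:
  assumes C: "C \<in> BNC" and D: "D \<in> BNC" and i: "1 \<le> i" "i \<le> sz C"
  shows "bnc_comp C i D \<in> BNC"
proof (cases "sz C = 1 \<and> sz D = 1")
  case True
  then have "C = bnc_unit" "D = bnc_unit" "i = 1"
    using BNC_sz_one[OF C] BNC_sz_one[OF D] i by auto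
  then show ?thesis
    using bnc_comp_unit_left[OF D] D by simp
next
  case False
  note m = BNC_sz_pos[OF D]
  have uncoloured_edge: "2 \<le> sz C \<and> 2 \<le> sz D"
    if "(i, i + 1) \<notin> blue C \<union> red C \<and> (1, sz D + 1) \<notin> blue D \<union> red D"
    using that BNC_sz_pos[OF C] BNC_sz_one[OF C] m BNC_sz_one[OF D] i by (fastforce simp: le_Suc_eq)
  show ?thesis
  proof (rule BNC_I)
    show "2 \<le> sz (bnc_comp C i D)"
      using False BNC_sz_pos[OF C] m by auto
    show "blue (bnc_comp C i D) \<subseteq> arcs (sz (bnc_comp C i D))"
      unfolding blue_bnc_comp sz_bnc_comp
      by (rule graft_subset_arcs[OF BNC_blue_arcs[OF C] BNC_blue_arcs[OF D] i m])
    show "red (bnc_comp C i D) \<subseteq> diagonals (sz (bnc_comp C i D))"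
      unfolding red_bnc_comp sz_bnc_comp
      by (rule graft_subset_diagonals[OF BNC_red_diagonals[OF C] BNC_red_diagonals[OF D] i m
            uncoloured_edge])
    show "blue (bnc_comp C i D) \<inter> red (bnc_comp C i D) = {}"
      unfolding blue_bnc_comp red_bnc_comp
      by (rule graft_disjoint[OF BNC_blue_arcs[OF C] BNC_red_arcs[OF C] BNC_blue_arcs[OF D]
            BNC_red_arcs[OF D] i(1) m BNC_disjoint[OF C] BNC_disjoint[OF D]]) blast
    show "noncrossing (blue (bnc_comp C i D) \<union> red (bnc_comp C i D))"
      unfolding blue_bnc_comp red_bnc_comp graft_Un
      using BNC_noncrossing[OF C] BNC_noncrossing[OF D] BNC_blue_arcs[OF D] BNC_red_arcs[OF D] i(1) m
      by (intro graft_noncrossing) auto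
  qed
qed

lemma bnc_comp_assoc_nested:
  assumes x: "x \<in> BNC" and y: "y \<in> BNC" and z: "z \<in> BNC"
    and i: "1 \<le> i" "i \<le> sz x" and j: "1 \<le> j" "j \<le> sz y"
  shows "bnc_comp (bnc_comp x i y) (i + j - 1) z = bnc_comp x i (bnc_comp y j z)"
proof (cases "sz y = 1")
  case True
  text \<open>Then the arc \<open>(i + j - 1, i + j)\<close> of \<open>x \<circ>\<^sub>i y\<close> is the glued arc rather than an edge
    of \<open>y\<close>, so this case is settled by the unit laws instead.\<close>
  then have "y = bnc_unit" "j = 1"
    using BNC_sz_one[OF y] j by auto
  then show ?thesis
    using bnc_comp_unit_right[OF x i] bnc_comp_unit_left[OF z] by simp
next
  case False
  have m: "2 \<le> sz y"
    using BNC_sz_pos[OF y] False by auto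
  note p = BNC_sz_pos[OF z] and arcs_z = BNC_blue_arcs[OF z] BNC_red_arcs[OF z]
  have k: "i + j - 1 + 1 = i + j" and q: "sz y + sz z - 1 + 1 = sz y + sz z"
    using i j p by auto
  show ?thesis
  proof (rule bnc.equality)
    show "blue (bnc_comp (bnc_comp x i y) (i + j - 1) z) = blue (bnc_comp x i (bnc_comp y j z))"
      unfolding blue_bnc_comp sz_bnc_comp k q inner_edge_in_graft[OF i(1) j m]
        base_in_graft[OF j m p arcs_z(1)]
      by (rule graft_assoc_nested[OF i(1) j m p arcs_z(1)])
    show "red (bnc_comp (bnc_comp x i y) (i + j - 1) z) = red (bnc_comp x i (bnc_comp y j z))"
      unfolding red_bnc_comp blue_bnc_comp sz_bnc_comp k q Un_iff inner_edge_in_graft[OF i(1) j m]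
        base_in_graft[OF j m p arcs_z(1)] base_in_graft[OF j m p arcs_z(2)]
      by (rule graft_assoc_nested[OF i(1) j m p arcs_z(2)])
  qed (use i j p in auto)
qed

lemma bnc_comp_assoc_parallel:
  assumes x: "x \<in> BNC" and y: "y \<in> BNC" and z: "z \<in> BNC"
    and ij: "1 \<le> i" "i < j" "j \<le> sz x"
  shows "bnc_comp (bnc_comp x i y) (j + sz y - 1) z = bnc_comp (bnc_comp x j z) i y"
proof -
  note m = BNC_sz_pos[OF y] and arcs_y = BNC_blue_arcs[OF y] BNC_red_arcs[OF y]
  note p = BNC_sz_pos[OF z] and arcs_z = BNC_blue_arcs[OF z] BNC_red_arcs[OF z]
  have k: "j + sz y - 1 + 1 = j + sz y"
    using m by auto
  show ?thesis
  proof (rule bnc.equality)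
    show "blue (bnc_comp (bnc_comp x i y) (j + sz y - 1) z) = blue (bnc_comp (bnc_comp x j z) i y)"
      unfolding blue_bnc_comp sz_bnc_comp k later_edge_in_graft[OF ij(2) m arcs_y(1)]
        earlier_edge_in_graft[OF ij(2) p arcs_z(1)]
      by (rule graft_assoc_parallel[OF ij(1,2) m p arcs_y(1) arcs_z(1)])
    show "red (bnc_comp (bnc_comp x i y) (j + sz y - 1) z) = red (bnc_comp (bnc_comp x j z) i y)"
      unfolding red_bnc_comp blue_bnc_comp sz_bnc_comp k Un_iff
        later_edge_in_graft[OF ij(2) m arcs_y(1)] later_edge_in_graft[OF ij(2) m arcs_y(2)]
        earlier_edge_in_graft[OF ij(2) p arcs_z(1)] earlier_edge_in_graft[OF ij(2) p arcs_z(2)]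
      by (rule graft_assoc_parallel[OF ij(1,2) m p arcs_y(2) arcs_z(2)])
  qed (use m p ij in auto)
qed

theorem proposition2p1:
  shows "ns_operad BNC sz bnc_comp bnc_unit"
  unfolding ns_operad_def
proof (intro conjI ballI allI impI)
  show "bnc_unit \<in> BNC" "sz bnc_unit = 1"
    by (simp_all add: bnc_unit_in_BNC)
  fix x y i assume "x \<in> BNC" "y \<in> BNC" "1 \<le> i \<and> i \<le> sz x"
  then show "bnc_comp x i y \<in> BNC" "sz (bnc_comp x i y) = sz x + sz y - 1"
    by (simp_all add: bnc_comp_closed)
next
  fix x assume "x \<in> BNC"
  then show "bnc_comp bnc_unit 1 x = x"
    by (rule bnc_comp_unit_left)
next
  fix x i assume "x \<in> BNC" "1 \<le> i \<and> i \<le> sz x"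
  then show "bnc_comp x i bnc_unit = x"
    by (simp add: bnc_comp_unit_right)
next
  fix x y z i j
  assume "x \<in> BNC" "y \<in> BNC" "z \<in> BNC" "1 \<le> i \<and> i \<le> sz x \<and> 1 \<le> j \<and> j \<le> sz y"
  then show "bnc_comp (bnc_comp x i y) (i + j - 1) z = bnc_comp x i (bnc_comp y j z)"
    by (intro bnc_comp_assoc_nested) auto
next
  fix x y z i j assume "x \<in> BNC" "y \<in> BNC" "z \<in> BNC" "1 \<le> i \<and> i < j \<and> j \<le> sz x"
  then show "bnc_comp (bnc_comp x i y) (j + sz y - 1) z = bnc_comp (bnc_comp x j z) i y"
    by (intro bnc_comp_assoc_parallel) auto
qed

end
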